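(* Take maps of event structures $f: A\to C$ and $g: B \to C$, and take their pullback $A\circledast B$. Suppose moreover that in the pullback, we have $[(a, b)]_x \rightarrow [(a', b')]_x$. Then necessarily, $a\rightarrow a'$ in $A$ or $b\rightarrow b'$ in $B$.
   Context: For events $e,e'$ of an event structure, $e \rightarrow e'$ denotes immediate causal dependency: $e<e'$ and no event lies strictly between them. The pullback $A\circledast B$ of $f:A\to C$ and $g:B\to C$ in the category of event structures and (total) maps is constructed as follows: in the product stable family $\mathcal{C}(A)\times\mathcal{C}(B)$, restrict to the set $R$ of pairs $(a,b)$ with $f a = g b$, and take the event structure of primes of the resulting stable family. Its events are primes $[(a,b)]_x$, where $x$ is a configuration of the restricted stable family containing $(a,b)$ and $[(a,b)]_x=\{e\in x\mid e\le_x (a,b)\}$ with $e\le_x e'$ iff every sub-configuration of $x$ containing $e'$ contains $e$; causality is inclusion and a finite set of primes is consistent iff its union is a configuration. *)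

theory Defs
  imports Main
begin

record 'a evstr =
  ev  :: "'a set"
  leq :: "'a \<Rightarrow> 'a \<Rightarrow> bool"
  con :: "'a set set"

definition is_es :: "'a evstr \<Rightarrow> bool" where
  "is_es E \<longleftrightarrow>
     (\<forall>e\<in>ev E. leq E e e) \<and>
     (\<forall>e e'. leq E e e' \<longrightarrow> e \<in> ev E \<and> e' \<in> ev E) \<and>
     (\<forall>e e'. leq E e e' \<and> leq E e' e \<longrightarrow> e = e') \<and>
     (\<forall>e e' e''. leq E e e' \<and> leq E e' e'' \<longrightarrow> leq E e e'') \<and>
     (\<forall>e\<in>ev E. finite {e'. leq E e' e}) \<and>
     (\<forall>X\<in>con E. finite X \<and> X \<subseteq> ev E) \<and>
     (\<forall>e\<in>ev E. {e} \<in> con E) \<and>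
     (\<forall>X Y. Y \<subseteq> X \<and> X \<in> con E \<longrightarrow> Y \<in> con E) \<and>
     (\<forall>X e e'. X \<in> con E \<and> e \<in> X \<and> leq E e' e \<longrightarrow> insert e' X \<in> con E)"

definition conf :: "'a evstr \<Rightarrow> 'a set set" where
  "conf E = {x. finite x \<and> x \<subseteq> ev E \<and> x \<in> con E \<and>
                (\<forall>e\<in>x. \<forall>e'. leq E e' e \<longrightarrow> e' \<in> x)}"

definition es_map :: "'a evstr \<Rightarrow> 'c evstr \<Rightarrow> ('a \<Rightarrow> 'c) \<Rightarrow> bool" where
  "es_map A C f \<longleftrightarrow> (\<forall>x\<in>conf A. f ` x \<in> conf C \<and> inj_on f x)"

definition imm :: "'a evstr \<Rightarrow> 'a \<Rightarrow> 'a \<Rightarrow> bool" where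
  "imm E e e' \<longleftrightarrow> leq E e e' \<and> e \<noteq> e' \<and>
     \<not> (\<exists>e''. leq E e e'' \<and> leq E e'' e' \<and> e'' \<noteq> e \<and> e'' \<noteq> e')"

text \<open>Product stable family \<open>C(A) \<times> C(B)\<close> (for total maps).\<close>
definition prod_fam :: "'a evstr \<Rightarrow> 'b evstr \<Rightarrow> ('a \<times> 'b) set set" where
  "prod_fam A B = {x. finite x \<and> x \<subseteq> ev A \<times> ev B \<and>
       fst ` x \<in> conf A \<and> snd ` x \<in> conf B \<and>
       inj_on fst x \<and> inj_on snd x \<and>
       (\<forall>e\<in>x. \<forall>e'\<in>x. e \<noteq> e' \<longrightarrow>
          (\<exists>y. y \<subseteq> x \<and> fst ` y \<in> conf A \<and> snd ` y \<in> conf B \<and>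
               (e \<in> y \<longleftrightarrow> e' \<notin> y)))}"

definition restr_fam :: "'e set set \<Rightarrow> 'e set \<Rightarrow> 'e set set" where
  "restr_fam F R = {x \<in> F. x \<subseteq> R}"

definition pb_fam :: "'a evstr \<Rightarrow> 'b evstr \<Rightarrow> ('a \<Rightarrow> 'c) \<Rightarrow> ('b \<Rightarrow> 'c) \<Rightarrow> ('a \<times> 'b) set set" where
  "pb_fam A B f g = restr_fam (prod_fam A B) {(a, b). f a = g b}"

definition prime :: "'e set set \<Rightarrow> 'e set \<Rightarrow> 'e \<Rightarrow> 'e set" where
  "prime F x e = {e' \<in> x. \<forall>y\<in>F. y \<subseteq> x \<longrightarrow> e \<in> y \<longrightarrow> e' \<in> y}"

definition primes :: "'e set set \<Rightarrow> 'e set set" where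
  "primes F = {prime F x e | x e. x \<in> F \<and> e \<in> x}"

text \<open>Immediate causality in the event structure of primes (causality = inclusion).\<close>
definition imm_pr :: "'e set set \<Rightarrow> 'e set \<Rightarrow> 'e set \<Rightarrow> bool" where
  "imm_pr F p p' \<longleftrightarrow> p \<in> primes F \<and> p' \<in> primes F \<and> p \<subset> p' \<and>
     \<not> (\<exists>q\<in>primes F. p \<subset> q \<and> q \<subset> p')"

end

theory Submission
  imports Defs
begin

text \<open>Inside a configuration \<open>x\<close> of the product family, a subset \<open>y \<subseteq> x\<close> has configurations
  as both projections exactly when it is down-closed under the relation \<open>w \<preceq> u\<close> given by
  \<open>fst w \<le> fst u\<close> or \<open>snd w \<le> snd u\<close>. Hence the prime \<open>[e]\<^sub>x\<close> is the down-closure of \<open>e\<close>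
  under \<open>\<preceq>\<close>: it lies in the pullback family, and it is \<open>{e}\<close> together with the primes of the
  other events \<open>\<preceq>\<close>-below \<open>e\<close>. If \<open>[e]\<^sub>x \<rightarrow> [e']\<^sub>x\<close>, then \<open>e\<close> lies in the prime of such an
  event \<open>w \<preceq> e'\<close>, and \<open>[e]\<^sub>x \<subseteq> [w]\<^sub>x \<subset> [e']\<^sub>x\<close> forces \<open>w = e\<close>, so \<open>a \<le> a'\<close> or \<open>b \<le> b'\<close>.
  An event strictly between \<open>a\<close> and \<open>a'\<close> (or \<open>b\<close> and \<open>b'\<close>) is the projection of an event of
  \<open>x\<close> whose prime would lie strictly between \<open>[e]\<^sub>x\<close> and \<open>[e']\<^sub>x\<close>.\<close>

lemma conf_downclosed_subset:
  assumes "is_es E" "X \<in> conf E" "Y \<subseteq> X" "\<forall>e\<in>Y. \<forall>e'. leq E e' e \<longrightarrow> e' \<in> Y"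
  shows "Y \<in> conf E"
proof -
  have X: "finite X" "X \<subseteq> ev E" "X \<in> con E" using assms(2) unfolding conf_def by auto
  have "\<forall>X Y. Y \<subseteq> X \<and> X \<in> con E \<longrightarrow> Y \<in> con E"
    using assms(1) unfolding is_es_def by blast
  then have "Y \<in> con E" using X(3) assms(3) by blast
  moreover have "finite Y" "Y \<subseteq> ev E" using X(1,2) assms(3) finite_subset by auto
  ultimately show ?thesis
    using assms(4) unfolding conf_def by blast
qed

lemma conf_downclosed: "X \<in> conf E \<Longrightarrow> e \<in> X \<Longrightarrow> leq E e' e \<Longrightarrow> e' \<in> X"
  unfolding conf_def by blast

lemma image_conf_iff_downclosed:
  assumes "is_es E" "h ` x \<in> conf E" "inj_on h x" "y \<subseteq> x"
  shows "h ` y \<in> conf E \<longleftrightarrow> (\<forall>u\<in>y. \<forall>w\<in>x. leq E (h w) (h u) \<longrightarrow> w \<in> y)"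
proof
  assume y_conf: "h ` y \<in> conf E"
  show "\<forall>u\<in>y. \<forall>w\<in>x. leq E (h w) (h u) \<longrightarrow> w \<in> y"
  proof (intro ballI impI)
    fix u w assume "u \<in> y" "w \<in> x" "leq E (h w) (h u)"
    then have "h w \<in> h ` y"
      using conf_downclosed[OF y_conf] by blast
    then obtain v where "v \<in> y" "h w = h v" by blast
    moreover from this have "w = v"
      using inj_onD[OF assms(3)] assms(4) \<open>w \<in> x\<close> by blast
    ultimately show "w \<in> y" by simp
  qed
next
  assume closed: "\<forall>u\<in>y. \<forall>w\<in>x. leq E (h w) (h u) \<longrightarrow> w \<in> y"
  have "\<forall>c\<in>h ` y. \<forall>c'. leq E c' c \<longrightarrow> c' \<in> h ` y"
  proof (intro ballI allI impI)
    fix c c' assume "c \<in> h ` y" "leq E c' c"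
    then obtain u where u: "u \<in> y" "c = h u" by blast
    have "c' \<in> h ` x"
      using conf_downclosed[OF assms(2)] assms(4) u \<open>leq E c' c\<close> by blast
    then obtain w where "w \<in> x" "c' = h w" by blast
    then show "c' \<in> h ` y" using closed u \<open>leq E c' c\<close> by blast
  qed
  then show "h ` y \<in> conf E"
    by (rule conf_downclosed_subset[OF assms(1,2) image_mono[OF assms(4)]])
qed

lemma imm_of_no_between:
  assumes "h ` x \<in> conf E" "inj_on h x" "e \<in> x" "e' \<in> x" "e \<noteq> e'" "leq E (h e) (h e')"
    and between: "\<And>w. w \<in> x \<Longrightarrow> leq E (h e) (h w) \<Longrightarrow> leq E (h w) (h e') \<Longrightarrow> w = e \<or> w = e'"
  shows "imm E (h e) (h e')"
proof -
  have "h e \<noteq> h e'"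
    using assms(2-5) inj_onD by metis
  moreover have "c = h e \<or> c = h e'" if "leq E (h e) c" "leq E c (h e')" for c
  proof -
    have "c \<in> h ` x"
      using conf_downclosed[OF assms(1)] assms(4) that(2) by blast
    then obtain w where "w \<in> x" "c = h w" by blast
    then show ?thesis using between that by blast
  qed
  ultimately show ?thesis
    using assms(6) unfolding imm_def by blast
qed

definition prod_subconf :: "'a evstr \<Rightarrow> 'b evstr \<Rightarrow> ('a \<times> 'b) set \<Rightarrow> ('a \<times> 'b) set \<Rightarrow> bool" where
  "prod_subconf A B x y \<longleftrightarrow> y \<subseteq> x \<and> fst ` y \<in> conf A \<and> snd ` y \<in> conf B"

definition prod_below :: "'a evstr \<Rightarrow> 'b evstr \<Rightarrow> 'a \<times> 'b \<Rightarrow> 'a \<times> 'b \<Rightarrow> bool" where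
  "prod_below A B w u \<longleftrightarrow> leq A (fst w) (fst u) \<or> leq B (snd w) (snd u)"

definition prod_prime :: "'a evstr \<Rightarrow> 'b evstr \<Rightarrow> ('a \<times> 'b) set \<Rightarrow> 'a \<times> 'b \<Rightarrow> ('a \<times> 'b) set" where
  "prod_prime A B x e = {w \<in> x. \<forall>y. prod_subconf A B x y \<and> e \<in> y \<longrightarrow> w \<in> y}"

definition prod_prime_imm :: "'a evstr \<Rightarrow> 'b evstr \<Rightarrow> ('a \<times> 'b) set \<Rightarrow> 'a \<times> 'b \<Rightarrow> 'a \<times> 'b \<Rightarrow> bool" where
  "prod_prime_imm A B x e e' \<longleftrightarrow> prod_prime A B x e \<subset> prod_prime A B x e' \<and>
     (\<forall>w\<in>x. \<not> (prod_prime A B x e \<subset> prod_prime A B x w \<and> prod_prime A B x w \<subset> prod_prime A B x e'))"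

lemma prod_fam_subconf:
  "y \<in> prod_fam A B \<Longrightarrow> y \<subseteq> x \<Longrightarrow> prod_subconf A B x y"
  unfolding prod_fam_def prod_subconf_def by blast

context
  fixes A :: "'a evstr" and B :: "'b evstr" and x :: "('a \<times> 'b) set"
  assumes isA: "is_es A" and isB: "is_es B" and x_prod: "x \<in> prod_fam A B"
begin

lemma prod_subconf_iff:
  "prod_subconf A B x y \<longleftrightarrow>
     y \<subseteq> x \<and> (\<forall>u\<in>y. \<forall>w\<in>x. prod_below A B w u \<longrightarrow> w \<in> y)"
proof -
  have "fst ` x \<in> conf A" "inj_on fst x" "snd ` x \<in> conf B" "inj_on snd x"
    using x_prod unfolding prod_fam_def by auto
  then show ?thesis
    using image_conf_iff_downclosed[OF isA, of fst x y] image_conf_iff_downclosed[OF isB, of snd x y]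
    unfolding prod_subconf_def prod_below_def by blast
qed

lemma prod_subconf_Int:
  "prod_subconf A B x y \<Longrightarrow> prod_subconf A B x z \<Longrightarrow> prod_subconf A B x (y \<inter> z)"
  unfolding prod_subconf_iff by blast

lemma prod_subconf_separates:
  assumes "u \<in> x" "v \<in> x" "u \<noteq> v"
  obtains y where "prod_subconf A B x y" "u \<in> y \<longleftrightarrow> v \<notin> y"
proof -
  have "\<forall>e\<in>x. \<forall>e'\<in>x. e \<noteq> e' \<longrightarrow>
          (\<exists>y. y \<subseteq> x \<and> fst ` y \<in> conf A \<and> snd ` y \<in> conf B \<and> (e \<in> y \<longleftrightarrow> e' \<notin> y))"
    using x_prod unfolding prod_fam_def mem_Collect_eq by (elim conjE)
  then show ?thesis
    using assms that unfolding prod_subconf_def by blast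
qed

lemma prod_subconf_in_prod_fam:
  assumes "prod_subconf A B x y"
  shows "y \<in> prod_fam A B"
proof -
  have "\<forall>u\<in>y. \<forall>v\<in>y. u \<noteq> v \<longrightarrow>
          (\<exists>z. z \<subseteq> y \<and> fst ` z \<in> conf A \<and> snd ` z \<in> conf B \<and> (u \<in> z \<longleftrightarrow> v \<notin> z))"
  proof (intro ballI impI)
    fix u v assume uv: "u \<in> y" "v \<in> y" "u \<noteq> v"
    have "u \<in> x" "v \<in> x" using assms uv unfolding prod_subconf_def by auto
    then obtain z where "prod_subconf A B x z" "u \<in> z \<longleftrightarrow> v \<notin> z"
      using prod_subconf_separates uv(3) by blast
    then have "prod_subconf A B x (z \<inter> y)" "u \<in> z \<inter> y \<longleftrightarrow> v \<notin> z \<inter> y"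
      using prod_subconf_Int assms uv by auto
    then show "\<exists>z. z \<subseteq> y \<and> fst ` z \<in> conf A \<and> snd ` z \<in> conf B \<and> (u \<in> z \<longleftrightarrow> v \<notin> z)"
      unfolding prod_subconf_def by blast
  qed
  moreover have "y \<subseteq> x" "fst ` y \<in> conf A" "snd ` y \<in> conf B"
    using assms unfolding prod_subconf_def by auto
  moreover from this(1) have "finite y" "y \<subseteq> ev A \<times> ev B" "inj_on fst y" "inj_on snd y"
    using x_prod finite_subset inj_on_subset unfolding prod_fam_def by auto
  ultimately show ?thesis
    unfolding prod_fam_def mem_Collect_eq by (intro conjI)
qed

lemma prod_prime_subset: "prod_prime A B x e \<subseteq> x"
  unfolding prod_prime_def by auto

lemma prod_prime_self: "e \<in> x \<Longrightarrow> e \<in> prod_prime A B x e"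
  unfolding prod_prime_def by auto

lemma prod_prime_least: "prod_subconf A B x y \<Longrightarrow> e \<in> y \<Longrightarrow> prod_prime A B x e \<subseteq> y"
  unfolding prod_prime_def by auto

lemma prod_prime_subconf: "prod_subconf A B x (prod_prime A B x e)"
  unfolding prod_subconf_iff prod_prime_def by blast

lemma prod_prime_below:
  "u \<in> x \<Longrightarrow> w \<in> x \<Longrightarrow> prod_below A B w u \<Longrightarrow> w \<in> prod_prime A B x u"
  using prod_prime_subconf prod_prime_self unfolding prod_subconf_iff by blast

lemma prod_prime_mono: "u \<in> prod_prime A B x e \<Longrightarrow> prod_prime A B x u \<subseteq> prod_prime A B x e"
  unfolding prod_prime_def by auto

text \<open>The separation axiom of the product family makes \<open>e \<mapsto> [e]\<^sub>x\<close> injective.\<close>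

lemma prod_prime_inj:
  assumes "u \<in> x" "v \<in> x" "prod_prime A B x u = prod_prime A B x v"
  shows "u = v"
proof (rule ccontr)
  assume "u \<noteq> v"
  then obtain y where "prod_subconf A B x y" "u \<in> y \<longleftrightarrow> v \<notin> y"
    using prod_subconf_separates assms(1,2) by blast
  then show False
    using prod_prime_least prod_prime_self assms by blast
qed

lemma prod_prime_decomp:
  assumes "e \<in> x"
  shows "prod_prime A B x e \<subseteq>
           insert e (\<Union>{prod_prime A B x w | w. w \<in> x \<and> w \<noteq> e \<and> prod_below A B w e})"
    (is "_ \<subseteq> ?U")
proof (rule prod_prime_least)
  have "\<forall>u\<in>?U. \<forall>w\<in>x. prod_below A B w u \<longrightarrow> w \<in> ?U"
  proof (intro ballI impI)
    fix u w assume u: "u \<in> ?U" and w: "w \<in> x" and "prod_below A B w u"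
    then consider "u = e" | v where "v \<in> x" "v \<noteq> e" "prod_below A B v e" "u \<in> prod_prime A B x v"
      by blast
    then show "w \<in> ?U"
    proof cases
      case 1
      then show ?thesis using w \<open>prod_below A B w u\<close> prod_prime_self by blast
    next
      case 2
      then have "w \<in> prod_prime A B x v"
        using w \<open>prod_below A B w u\<close> prod_prime_below prod_prime_mono prod_prime_subset by blast
      then show ?thesis using 2 by blast
    qed
  qed
  then show "prod_subconf A B x ?U"
    unfolding prod_subconf_iff using assms prod_prime_subset by blast
qed simp

lemma prod_prime_imm_between:
  assumes "prod_prime_imm A B x e e'" "e \<in> x" "e' \<in> x" "w \<in> x"
    and "prod_prime A B x e \<subseteq> prod_prime A B x w" "prod_prime A B x w \<subseteq> prod_prime A B x e'"
  shows "w = e \<or> w = e'"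
proof -
  have "prod_prime A B x w = prod_prime A B x e \<or> prod_prime A B x w = prod_prime A B x e'"
    using assms(1,4-6) unfolding prod_prime_imm_def by blast
  then show ?thesis
    using prod_prime_inj[OF assms(4,2)] prod_prime_inj[OF assms(4,3)] by blast
qed

lemma prod_prime_imm_below:
  assumes "prod_prime_imm A B x e e'" "e \<in> x" "e' \<in> x"
  shows "prod_below A B e e'"
proof -
  have "e \<in> prod_prime A B x e'" "e \<noteq> e'"
    using prod_prime_self[OF assms(2)] assms(1) unfolding prod_prime_imm_def by auto
  then have "e \<in> \<Union>{prod_prime A B x w | w. w \<in> x \<and> w \<noteq> e' \<and> prod_below A B w e'}"
    using prod_prime_decomp[OF assms(3)] by blast
  then obtain w where w: "w \<in> x" "w \<noteq> e'" "prod_below A B w e'" "e \<in> prod_prime A B x w"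
    by blast
  have "prod_prime A B x e \<subseteq> prod_prime A B x w" "prod_prime A B x w \<subseteq> prod_prime A B x e'"
    using prod_prime_mono[OF w(4)] prod_prime_mono[OF prod_prime_below[OF assms(3) w(1,3)]] .
  then have "w = e"
    using prod_prime_imm_between[OF assms w(1)] w(2) by blast
  then show ?thesis using w(3) by simp
qed

lemma prod_prime_imm_imm:
  assumes "prod_prime_imm A B x e e'" "e \<in> x" "e' \<in> x"
  shows "imm A (fst e) (fst e') \<or> imm B (snd e) (snd e')"
proof -
  have between: "w = e \<or> w = e'" if "w \<in> x" "prod_below A B e w" "prod_below A B w e'" for w
    by (rule prod_prime_imm_between[OF assms that(1)
          prod_prime_mono[OF prod_prime_below[OF that(1) assms(2) that(2)]]
          prod_prime_mono[OF prod_prime_below[OF assms(3) that(1,3)]]])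
  have "e \<noteq> e'"
    using assms(1) unfolding prod_prime_imm_def by auto
  moreover have "fst ` x \<in> conf A" "inj_on fst x" "snd ` x \<in> conf B" "inj_on snd x"
    using x_prod unfolding prod_fam_def by auto
  ultimately have "leq A (fst e) (fst e') \<Longrightarrow> imm A (fst e) (fst e')"
    and "leq B (snd e) (snd e') \<Longrightarrow> imm B (snd e) (snd e')"
    using imm_of_no_between[of fst x A e e'] imm_of_no_between[of snd x B e e'] between assms(2,3)
    unfolding prod_below_def by blast+
  then show ?thesis
    using prod_prime_imm_below[OF assms] unfolding prod_below_def by blast
qed

end

lemma pb_fam_iff: "y \<in> pb_fam A B f g \<longleftrightarrow> y \<in> prod_fam A B \<and> y \<subseteq> {(a, b). f a = g b}"
  unfolding pb_fam_def restr_fam_def by blast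

lemma prod_prime_in_pb_fam:
  assumes "is_es A" "is_es B" "x \<in> pb_fam A B f g"
  shows "prod_prime A B x e \<in> pb_fam A B f g"
proof -
  have x_prod: "x \<in> prod_fam A B" and "x \<subseteq> {(a, b). f a = g b}"
    using assms(3) unfolding pb_fam_iff by auto
  moreover have "prod_prime A B x e \<in> prod_fam A B"
    using prod_subconf_in_prod_fam[OF assms(1,2) x_prod] prod_prime_subconf[OF assms(1,2) x_prod] .
  ultimately show ?thesis
    using prod_prime_subset[OF assms(1,2) x_prod, of e] unfolding pb_fam_iff by (meson order_trans)
qed

lemma prime_pb_fam_eq:
  assumes "is_es A" "is_es B" "x \<in> pb_fam A B f g" "e \<in> x"
  shows "prime (pb_fam A B f g) x e = prod_prime A B x e"
proof -
  have x_prod: "x \<in> prod_fam A B"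
    using assms(3) unfolding pb_fam_iff by auto
  note prime_facts = prod_prime_in_pb_fam[OF assms(1-3)] prod_prime_subset[OF assms(1,2) x_prod]
    prod_prime_least[OF assms(1,2) x_prod]
  show ?thesis
  proof (intro equalityI subsetI)
    fix w
    assume "w \<in> prime (pb_fam A B f g) x e"
    then have "\<forall>y\<in>pb_fam A B f g. y \<subseteq> x \<longrightarrow> e \<in> y \<longrightarrow> w \<in> y"
      unfolding prime_def by blast
    then show "w \<in> prod_prime A B x e"
      using prime_facts prod_prime_self[OF assms(1,2) x_prod assms(4)] by blast
  next
    fix w
    assume w: "w \<in> prod_prime A B x e"
    have "w \<in> y" if "y \<in> pb_fam A B f g" "y \<subseteq> x" "e \<in> y" for y
    proof -
      have "prod_subconf A B x y"
        using prod_fam_subconf that(1,2) unfolding pb_fam_iff by blast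
      then show ?thesis
        using prime_facts w that(3) by blast
    qed
    then show "w \<in> prime (pb_fam A B f g) x e"
      using w prime_facts unfolding prime_def by blast
  qed
qed

lemma imm_pr_pb_fam_prod_prime_imm:
  assumes "is_es A" "is_es B" "x \<in> pb_fam A B f g" "e \<in> x" "e' \<in> x"
    and "imm_pr (pb_fam A B f g) (prime (pb_fam A B f g) x e) (prime (pb_fam A B f g) x e')"
  shows "prod_prime_imm A B x e e'"
proof -
  have prime_eq: "prime (pb_fam A B f g) x w = prod_prime A B x w" if "w \<in> x" for w
    using prime_pb_fam_eq[OF assms(1-3) that] .
  have "prod_prime A B x w \<in> primes (pb_fam A B f g)" if "w \<in> x" for w
    using assms(3) that prime_eq[OF that] unfolding primes_def by blast
  then show ?thesis
    using assms(6) unfolding imm_pr_def prime_eq[OF assms(4)] prime_eq[OF assms(5)] prod_prime_imm_def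
    by blast
qed

theorem mainTheorem4:
  fixes A :: "'a evstr" and B :: "'b evstr" and C :: "'c evstr"
    and f :: "'a \<Rightarrow> 'c" and g :: "'b \<Rightarrow> 'c"
  assumes "is_es A" and "is_es B" and "is_es C"
    and "es_map A C f" and "es_map B C g"
    and "x \<in> pb_fam A B f g"
    and "(a, b) \<in> x" and "(a', b') \<in> x"
    and "imm_pr (pb_fam A B f g) (prime (pb_fam A B f g) x (a, b))
                                 (prime (pb_fam A B f g) x (a', b'))"
  shows "imm A a a' \<or> imm B b b'"
proof -
  have "x \<in> prod_fam A B"
    using assms(6) unfolding pb_fam_iff by simp
  moreover have "prod_prime_imm A B x (a, b) (a', b')"
    using imm_pr_pb_fam_prod_prime_imm[OF assms(1,2,6-9)] .
  ultimately show ?thesis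
    using prod_prime_imm_imm[OF assms(1,2)] assms(7,8) by fastforce
qed

end
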